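(* Let $\Gamma=(V,\mathcal E)$ be a $\mathbb Z^d$-periodic graph with fundamental graph $\Gamma_*=(V_*,\mathcal E_* )$, $\nu=\#V_*$. (i) There exists a subgraph $T=(V_T,\mathcal E_T)$ of $\Gamma$ such that $T$ is a tree (connected and without cycles) and $V_T$ consists of $\nu$ vertices of $\Gamma$ which are pairwise not $\mathbb Z^d$-equivalent. (ii) For edge indices defined with respect to the fundamental vertex set $V_0=V_T$ of such a tree, the number $\beta=\sum_{v\in V_*}\beta_v/\varkappa_v$ (where $\beta_v$ is the number of bridges of $\Gamma_*$ starting at $v$) satisfies $$\beta\le 1\ \text{ if } \nu=1,\qquad \beta\le \nu-\sum_{v\in V_*}\frac{1}{\varkappa_v}\ \text{ if }\nu\ge2.$$
   Context: A $\mathbb Z^d$-periodic graph is a connected infinite graph $\Gamma=(V,\mathcal E)$, possibly with loops and multiple edges, on which $\mathbb Z^d$ acts freely by graph automorphisms ($v\mapsto v+m$), with all vertex degrees finite and finite quotient (fundamental) graph $\Gamma_*=\Gamma/\mathbb Z^d=(V_*,\mathcal E_* )$. Each undirected edge is regarded as two oppositely oriented edges; $\mathcal A$ is the set of oriented edges, $\mathcal A_*=\mathcal A/\mathbb Z^d$; the degree $\varkappa_v$ is the number of oriented edges starting at $v$. Given a set $V_0$ of $\nu$ pairwise non-equivalent vertices, each $v\in V$ is uniquely $v=v_0+[v]$ with $v_0\in V_0$, $[v]\in\mathbb Z^d$; the index of an oriented edge $\mathbf e=(u,v)$ is $\tau(\mathbf e)=[v]-[u]\in\mathbb Z^d$,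 which is invariant under the $\mathbb Z^d$-action and so defined on $\mathcal A_*$. A bridge is an oriented edge with nonzero index. *)

theory Defs
  imports "HOL-Analysis.Analysis"
begin

(* Vertices are all elements of type 'v, oriented
   edges are all elements of type 'e.  Each oriented edge e goes from src e to
   tgt e; rv e is the oppositely oriented copy of the same undirected edge
   (a fixed-point-free involution, so a loop also gives two oriented edges).
   Z^d = int ^ 'd acts by actV on vertices and actE on oriented edges. *)

fun walk_from :: "('e \<Rightarrow> 'v) \<Rightarrow> ('e \<Rightarrow> 'v) \<Rightarrow> 'v \<Rightarrow> 'e list \<Rightarrow> 'v \<Rightarrow> bool" where
  "walk_from src tgt u [] w = (u = w)"
| "walk_from src tgt u (e # es) w = (src e = u \<and> walk_from src tgt (tgt e) es w)"

definition orbV :: "(int^'d \<Rightarrow> 'v \<Rightarrow> 'v) \<Rightarrow> 'v \<Rightarrow> 'v set" where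
  "orbV actV v = range (\<lambda>m. actV m v)"

definition orbE :: "(int^'d \<Rightarrow> 'e \<Rightarrow> 'e) \<Rightarrow> 'e \<Rightarrow> 'e set" where
  "orbE actE e = range (\<lambda>m. actE m e)"

definition periodic_graph ::
  "('e \<Rightarrow> 'v) \<Rightarrow> ('e \<Rightarrow> 'v) \<Rightarrow> ('e \<Rightarrow> 'e) \<Rightarrow>
   (int^'d \<Rightarrow> 'v \<Rightarrow> 'v) \<Rightarrow> (int^'d \<Rightarrow> 'e \<Rightarrow> 'e) \<Rightarrow> bool" where
  "periodic_graph src tgt rv actV actE \<longleftrightarrow>
     (\<forall>e. rv (rv e) = e \<and> rv e \<noteq> e \<and> src (rv e) = tgt e) \<and>
     (\<forall>v. actV 0 v = v) \<and> (\<forall>m n v. actV (m + n) v = actV m (actV n v)) \<and>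
     (\<forall>e. actE 0 e = e) \<and> (\<forall>m n e. actE (m + n) e = actE m (actE n e)) \<and>
     (\<forall>m e. src (actE m e) = actV m (src e) \<and> tgt (actE m e) = actV m (tgt e)
            \<and> rv (actE m e) = actE m (rv e)) \<and>
     (\<forall>m v. actV m v = v \<longrightarrow> m = 0) \<and>
     (\<forall>v. finite {e. src e = v}) \<and>
     finite (range (orbV actV)) \<and>
     (\<forall>u w. \<exists>es. walk_from src tgt u es w)"

definition Vstar :: "(int^'d \<Rightarrow> 'v \<Rightarrow> 'v) \<Rightarrow> 'v set set" where
  "Vstar actV = range (orbV actV)"

definition Astar :: "(int^'d \<Rightarrow> 'e \<Rightarrow> 'e) \<Rightarrow> 'e set set" where
  "Astar actE = range (orbE actE)"

definition is_subgraph :: "('e \<Rightarrow> 'v) \<Rightarrow> ('e \<Rightarrow> 'v) \<Rightarrow> ('e \<Rightarrow> 'e) \<Rightarrow> 'v set \<Rightarrow> 'e set \<Rightarrow> bool" where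
  "is_subgraph src tgt rv VT ET \<longleftrightarrow>
     (\<forall>e\<in>ET. src e \<in> VT \<and> tgt e \<in> VT \<and> rv e \<in> ET)"

definition sub_connected :: "('e \<Rightarrow> 'v) \<Rightarrow> ('e \<Rightarrow> 'v) \<Rightarrow> 'v set \<Rightarrow> 'e set \<Rightarrow> bool" where
  "sub_connected src tgt VT ET \<longleftrightarrow>
     (\<forall>u\<in>VT. \<forall>w\<in>VT. \<exists>es. set es \<subseteq> ET \<and> walk_from src tgt u es w)"

(* a cycle: nonempty closed walk with pairwise distinct vertices and pairwise
   distinct undirected edges (covers loops and pairs of parallel edges) *)
definition has_cycle :: "('e \<Rightarrow> 'v) \<Rightarrow> ('e \<Rightarrow> 'v) \<Rightarrow> ('e \<Rightarrow> 'e) \<Rightarrow> 'e set \<Rightarrow> bool" where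
  "has_cycle src tgt rv ET \<longleftrightarrow>
     (\<exists>es. es \<noteq> [] \<and> set es \<subseteq> ET \<and> walk_from src tgt (src (hd es)) es (src (hd es)) \<and>
        distinct (map src es) \<and>
        (\<forall>i<length es. \<forall>j<length es. i \<noteq> j \<longrightarrow> es ! i \<noteq> es ! j \<and> es ! i \<noteq> rv (es ! j)))"

definition is_tree :: "('e \<Rightarrow> 'v) \<Rightarrow> ('e \<Rightarrow> 'v) \<Rightarrow> ('e \<Rightarrow> 'e) \<Rightarrow> 'v set \<Rightarrow> 'e set \<Rightarrow> bool" where
  "is_tree src tgt rv VT ET \<longleftrightarrow>
     is_subgraph src tgt rv VT ET \<and> sub_connected src tgt VT ET \<and> \<not> has_cycle src tgt rv ET"

definition fundamental_vertices :: "(int^'d \<Rightarrow> 'v \<Rightarrow> 'v) \<Rightarrow> 'v set \<Rightarrow> bool" where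
  "fundamental_vertices actV V0 \<longleftrightarrow>
     finite V0 \<and> card V0 = card (Vstar actV) \<and>
     (\<forall>u\<in>V0. \<forall>w\<in>V0. u \<noteq> w \<longrightarrow> orbV actV u \<noteq> orbV actV w)"

definition coord :: "(int^'d \<Rightarrow> 'v \<Rightarrow> 'v) \<Rightarrow> 'v set \<Rightarrow> 'v \<Rightarrow> int^'d" where
  "coord actV V0 v = (THE m. \<exists>v0\<in>V0. actV m v0 = v)"

definition edge_index :: "('e \<Rightarrow> 'v) \<Rightarrow> ('e \<Rightarrow> 'v) \<Rightarrow> (int^'d \<Rightarrow> 'v \<Rightarrow> 'v) \<Rightarrow> 'v set \<Rightarrow> 'e \<Rightarrow> int^'d" where
  "edge_index src tgt actV V0 e = coord actV V0 (tgt e) - coord actV V0 (src e)"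

definition kappa_star :: "('e \<Rightarrow> 'v) \<Rightarrow> (int^'d \<Rightarrow> 'v \<Rightarrow> 'v) \<Rightarrow> (int^'d \<Rightarrow> 'e \<Rightarrow> 'e) \<Rightarrow> 'v set \<Rightarrow> nat" where
  "kappa_star src actV actE C = card {A \<in> Astar actE. \<exists>e\<in>A. src e \<in> C}"

(* beta_v: number of bridges (oriented edges with nonzero index) of Gamma_* starting at C *)
definition beta_star :: "('e \<Rightarrow> 'v) \<Rightarrow> ('e \<Rightarrow> 'v) \<Rightarrow> (int^'d \<Rightarrow> 'v \<Rightarrow> 'v) \<Rightarrow> (int^'d \<Rightarrow> 'e \<Rightarrow> 'e)
    \<Rightarrow> 'v set \<Rightarrow> 'v set \<Rightarrow> nat" where
  "beta_star src tgt actV actE V0 C =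
     card {A \<in> Astar actE. \<exists>e\<in>A. src e \<in> C \<and> edge_index src tgt actV V0 e \<noteq> 0}"

end

theory Submission
  imports Defs
begin

text \<open>Part (i): grow a tree one \<open>\<int>\<^sup>d\<close>-orbit at a time. As long as some orbit is missed,
  connectedness of \<open>\<Gamma>\<close> gives an edge leaving the union of the orbits already met; translating it
  so that it starts at a tree vertex attaches a new leaf from a new orbit, and attaching a leaf
  keeps a tree a tree.
  Part (ii): if \<open>\<nu> \<ge> 2\<close>, every vertex \<open>v\<^sub>0\<close> of the tree \<open>T\<close> has a tree edge, whose endpoints both
  lie in \<open>V\<^sub>0 = V\<^sub>T\<close>; its whole orbit therefore has index \<open>0\<close>, so at least one of the \<open>\<kappa>\<^sub>v\<close> oriented
  edges of \<open>\<Gamma>\<^sub>*\<close> at \<open>v\<close> is not a bridge, i.e. \<open>\<beta>\<^sub>v/\<kappa>\<^sub>v \<le> 1 - 1/\<kappa>\<^sub>v\<close>.\<close>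

lemma walk_from_append:
  "walk_from src tgt a (xs @ ys) c \<longleftrightarrow> (\<exists>b. walk_from src tgt a xs b \<and> walk_from src tgt b ys c)"
  by (induction xs arbitrary: a) auto

lemma walk_from_hd_last:
  assumes "walk_from src tgt a es b" and "es \<noteq> []"
  shows "src (hd es) = a" and "tgt (last es) = b"
  using assms by (induction es arbitrary: a) (auto simp: neq_Nil_conv)

lemma walk_from_nth_Suc:
  assumes "walk_from src tgt a es b" and "Suc i < length es"
  shows "tgt (es ! i) = src (es ! Suc i)"
  using assms
proof (induction es arbitrary: a i)
  case (Cons e es)
  then show ?case by (cases es; cases i) auto
qed simp

lemma closed_walk_nth_next:
  assumes "walk_from src tgt a es a" and "i < length es"
  shows "tgt (es ! i) = src (es ! (Suc i mod length es))"
proof (cases "Suc i < length es")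
  case True
  then show ?thesis using walk_from_nth_Suc[OF assms(1)] by simp
next
  case False
  with assms(2) have "Suc i = length es" by simp
  then have "es \<noteq> []" "i = length es - 1" by auto
  then have "es ! i = last es" "es ! (Suc i mod length es) = hd es"
    by (simp_all add: last_conv_nth hd_conv_nth)
  then show ?thesis using walk_from_hd_last[OF assms(1) \<open>es \<noteq> []\<close>] by simp
qed

lemma walk_from_leaves_set:
  assumes "walk_from src tgt a es b" "a \<in> S" "b \<notin> S"
  shows "\<exists>e\<in>set es. src e \<in> S \<and> tgt e \<notin> S"
  using assms by (induction es arbitrary: a) auto

lemma sub_connected_add_leaf:
  assumes con: "sub_connected src tgt VT ET" and u: "src e \<in> VT"
    and src_rv: "src (rv e) = tgt e" and tgt_rv: "tgt (rv e) = src e"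
  shows "sub_connected src tgt (insert (tgt e) VT) (insert e (insert (rv e) ET))"
    (is "sub_connected _ _ _ ?ET'")
proof -
  have old: "\<exists>es. set es \<subseteq> ?ET' \<and> walk_from src tgt a es b" if "a \<in> VT" "b \<in> VT" for a b
  proof -
    from con that obtain es where "set es \<subseteq> ET" "walk_from src tgt a es b"
      unfolding sub_connected_def by blast
    then show ?thesis by blast
  qed
  have leave: "\<exists>es. set es \<subseteq> ?ET' \<and> walk_from src tgt (tgt e) es b" if "b \<in> VT" for b
  proof -
    from old[OF u that] obtain es where "set es \<subseteq> ?ET'" "walk_from src tgt (src e) es b" by blast
    then have "set (rv e # es) \<subseteq> ?ET'" "walk_from src tgt (tgt e) (rv e # es) b"
      using src_rv tgt_rv by simp_all
    then show ?thesis by blast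
  qed
  have enter: "\<exists>es. set es \<subseteq> ?ET' \<and> walk_from src tgt a es (tgt e)" if "a \<in> VT" for a
  proof -
    from old[OF that u] obtain es where "set es \<subseteq> ?ET'" "walk_from src tgt a es (src e)" by blast
    then have "set (es @ [e]) \<subseteq> ?ET'" "walk_from src tgt a (es @ [e]) (tgt e)"
      by (auto simp: walk_from_append)
    then show ?thesis by blast
  qed
  show ?thesis
    unfolding sub_connected_def
  proof (intro ballI)
    fix a b assume "a \<in> insert (tgt e) VT" "b \<in> insert (tgt e) VT"
    then consider "a = tgt e" "b = tgt e" | "a = tgt e" "b \<in> VT" | "a \<in> VT" "b = tgt e"
      | "a \<in> VT" "b \<in> VT" by blast
    then show "\<exists>es. set es \<subseteq> ?ET' \<and> walk_from src tgt a es b"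
    proof cases
      case 1
      then show ?thesis by (intro exI[of _ "[]"]) simp
    next
      case 2
      then show ?thesis using leave by simp
    next
      case 3
      then show ?thesis using enter by simp
    next
      case 4
      then show ?thesis using old by simp
    qed
  qed
qed

lemma closed_walk_pendant_mem_iff:
  assumes cw: "walk_from src tgt a es a"
    and leave: "\<And>f. f \<in> set es \<Longrightarrow> src f = tgt e \<Longrightarrow> f = rv e"
    and enter: "\<And>f. f \<in> set es \<Longrightarrow> tgt f = tgt e \<Longrightarrow> f = e"
    and src_rv: "src (rv e) = tgt e"
  shows "e \<in> set es \<longleftrightarrow> rv e \<in> set es"
proof
  assume "e \<in> set es"
  then obtain i where i: "i < length es" "es ! i = e" unfolding in_set_conv_nth by blast
  then have "Suc i mod length es < length es" by (metis mod_less_divisor gr_implies_not0 neq0_conv)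
  then have next_in: "es ! (Suc i mod length es) \<in> set es" by (rule nth_mem)
  moreover have "src (es ! (Suc i mod length es)) = tgt e"
    using closed_walk_nth_next[OF cw i(1)] i(2) by simp
  ultimately have "es ! (Suc i mod length es) = rv e" by (rule leave)
  with next_in show "rv e \<in> set es" by simp
next
  assume "rv e \<in> set es"
  then obtain i where i: "i < length es" "es ! i = rv e" unfolding in_set_conv_nth by blast
  define j where "j = (if i = 0 then length es - 1 else i - 1)"
  have j: "j < length es" "Suc j mod length es = i" using i(1) by (auto simp: j_def)
  have prev_in: "es ! j \<in> set es" using j(1) by (rule nth_mem)
  moreover have "tgt (es ! j) = tgt e" using closed_walk_nth_next[OF cw j(1)] j(2) i(2) src_rv by simp
  ultimately have "es ! j = e" by (rule enter)
  with prev_in show "e \<in> set es" by simp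
qed

text \<open>A cycle passing through the new leaf \<open>tgt e\<close> would have to enter it along \<open>e\<close> and leave
  it along \<open>rv e\<close>, using the same undirected edge twice.\<close>

lemma no_cycle_add_leaf:
  assumes sub: "is_subgraph src tgt rv VT ET" and nc: "\<not> has_cycle src tgt rv ET"
    and u: "src e \<in> VT" and w: "tgt e \<notin> VT"
    and rv_rv: "\<And>e. rv (rv e) = e" and rv_neq: "\<And>e. rv e \<noteq> e"
    and src_rv: "\<And>e. src (rv e) = tgt e"
  shows "\<not> has_cycle src tgt rv (insert e (insert (rv e) ET))"
proof
  assume "has_cycle src tgt rv (insert e (insert (rv e) ET))"
  then obtain es where ne: "es \<noteq> []" and st: "set es \<subseteq> insert e (insert (rv e) ET)"
    and cw: "walk_from src tgt (src (hd es)) es (src (hd es))"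
    and dm: "distinct (map src es)"
    and dd: "\<forall>i<length es. \<forall>j<length es. i \<noteq> j \<longrightarrow> es ! i \<noteq> es ! j \<and> es ! i \<noteq> rv (es ! j)"
    unfolding has_cycle_def by blast
  have tgt_rv: "tgt (rv e) = src e" using rv_rv src_rv by metis
  have ET_in_VT: "src f \<in> VT" "tgt f \<in> VT" if "f \<in> ET" for f
    using sub that unfolding is_subgraph_def by auto
  have leave: "f = rv e" if "f \<in> set es" "src f = tgt e" for f
  proof -
    have "f \<notin> ET" using ET_in_VT(1) that(2) w by metis
    moreover have "f \<noteq> e" using that(2) u w by metis
    ultimately show ?thesis using that(1) st by blast
  qed
  have enter: "f = e" if "f \<in> set es" "tgt f = tgt e" for f
  proof -
    have "f \<notin> ET" using ET_in_VT(2) that(2) w by metis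
    moreover have "f \<noteq> rv e" using that(2) tgt_rv u w by metis
    ultimately show ?thesis using that(1) st by blast
  qed
  have "\<not> (e \<in> set es \<and> rv e \<in> set es)"
  proof
    assume "e \<in> set es \<and> rv e \<in> set es"
    then obtain i j where ij: "i < length es" "es ! i = e" "j < length es" "es ! j = rv e"
      unfolding in_set_conv_nth by blast
    with rv_neq have "i \<noteq> j" by metis
    with dd ij have "es ! i \<noteq> rv (es ! j)" by blast
    with ij rv_rv show False by simp
  qed
  with closed_walk_pendant_mem_iff[where rv = rv, OF cw leave enter src_rv] st have "set es \<subseteq> ET" by blast
  then have "has_cycle src tgt rv ET"
    unfolding has_cycle_def by (intro exI[of _ es]) (use ne cw dm dd in simp)
  with nc show False ..
qed

lemma is_tree_add_leaf:
  assumes tree: "is_tree src tgt rv VT ET" and u: "src e \<in> VT" and w: "tgt e \<notin> VT"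
    and rv_rv: "\<And>e. rv (rv e) = e" and rv_neq: "\<And>e. rv e \<noteq> e"
    and src_rv: "\<And>e. src (rv e) = tgt e"
  shows "is_tree src tgt rv (insert (tgt e) VT) (insert e (insert (rv e) ET))"
proof -
  have tgt_rv: "\<And>e. tgt (rv e) = src e" using rv_rv src_rv by metis
  from tree have sub: "is_subgraph src tgt rv VT ET" and con: "sub_connected src tgt VT ET"
    and nc: "\<not> has_cycle src tgt rv ET" unfolding is_tree_def by auto
  have "is_subgraph src tgt rv (insert (tgt e) VT) (insert e (insert (rv e) ET))"
    using sub u src_rv tgt_rv rv_rv unfolding is_subgraph_def by auto
  with sub_connected_add_leaf[where rv = rv, OF con u src_rv tgt_rv]
    no_cycle_add_leaf[OF sub nc u w rv_rv rv_neq src_rv]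
  show ?thesis unfolding is_tree_def by blast
qed

lemma tree_edge_from_vertex:
  assumes "is_tree src tgt rv VT ET" "v \<in> VT" "w \<in> VT" "w \<noteq> v"
  obtains e where "e \<in> ET" "src e = v" "tgt e \<in> VT"
proof -
  obtain es where es: "set es \<subseteq> ET" "walk_from src tgt v es w"
    using assms unfolding is_tree_def sub_connected_def by blast
  with assms(4) have "es \<noteq> []" by auto
  with es have "hd es \<in> ET" "src (hd es) = v" using walk_from_hd_last(1) by auto
  moreover from this(1) assms(1) have "tgt (hd es) \<in> VT"
    unfolding is_tree_def is_subgraph_def by blast
  ultimately show ?thesis by (rule that)
qed

lemma card_ratio_le_1:
  assumes "B \<subseteq> K"
  shows "real (card B) / real (card K) \<le> 1"
proof (cases "finite K")
  case True
  with assms have "card B \<le> card K" by (rule card_mono[rotated])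
  then show ?thesis by (cases "card K = 0") (simp_all add: divide_le_eq_1)
qed simp

lemma card_ratio_le_1_minus:
  assumes "B \<subseteq> K - {a}" "a \<in> K"
  shows "real (card B) / real (card K) \<le> 1 - 1 / real (card K)"
proof (cases "finite K")
  case True
  then have "card B \<le> card (K - {a})" using assms(1) by (intro card_mono) auto
  also have "\<dots> = card K - 1" using assms(2) by (simp add: card_Diff_singleton)
  finally have "card B \<le> card K - 1" .
  moreover have "card K > 0" using True assms(2) card_gt_0_iff by blast
  ultimately have "real (card B) \<le> real (card K) - 1" "real (card K) > 0" by linarith+
  then show ?thesis by (simp add: field_simps)
qed simp

lemma is_tree_singleton: "is_tree src tgt rv {v} {}"
  unfolding is_tree_def is_subgraph_def sub_connected_def has_cycle_def
  by (auto intro: exI[of _ "[]"])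

lemma beta_star_ratio_le_1:
  "real (beta_star src tgt actV actE V0 C) / real (kappa_star src actV actE C) \<le> 1"
  unfolding beta_star_def kappa_star_def by (rule card_ratio_le_1) blast

context
  fixes src tgt :: "'e \<Rightarrow> 'v" and rv :: "'e \<Rightarrow> 'e"
    and actV :: "int^'d::finite \<Rightarrow> 'v \<Rightarrow> 'v" and actE :: "int^'d \<Rightarrow> 'e \<Rightarrow> 'e"
  assumes pg: "periodic_graph src tgt rv actV actE"
begin

lemma rv_rv: "rv (rv e) = e"
  and rv_neq: "rv e \<noteq> e"
  and src_rv: "src (rv e) = tgt e"
  and actV_zero: "actV 0 v = v"
  and actV_add: "actV (m + n) v = actV m (actV n v)"
  and actE_zero: "actE 0 e = e"
  and src_actE: "src (actE m e) = actV m (src e)"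
  and tgt_actE: "tgt (actE m e) = actV m (tgt e)"
  and actV_free: "actV m v = v \<Longrightarrow> m = 0"
  and finite_Vstar: "finite (Vstar actV)"
  and walk_exists: "\<exists>es. walk_from src tgt u es w"
  using pg unfolding periodic_graph_def Vstar_def by auto

lemma mem_orbV: "v \<in> orbV actV v"
  unfolding orbV_def by (metis actV_zero rangeI)

lemma orbV_actV: "orbV actV (actV m v) = orbV actV v"
proof
  show "orbV actV (actV m v) \<subseteq> orbV actV v"
    unfolding orbV_def by (auto simp flip: actV_add)
  show "orbV actV v \<subseteq> orbV actV (actV m v)"
  proof
    fix x assume "x \<in> orbV actV v"
    then obtain k where "x = actV k v" unfolding orbV_def by auto
    then have "x = actV (k - m) (actV m v)" by (simp flip: actV_add)
    then show "x \<in> orbV actV (actV m v)" unfolding orbV_def by auto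
  qed
qed

lemma actV_inject: "actV m v = actV n v \<Longrightarrow> m = n"
proof -
  assume "actV m v = actV n v"
  then have "actV (- n + m) v = actV (- n + n) v" by (simp only: actV_add)
  then have "actV (- n + m) v = v" by (simp add: actV_zero)
  then show "m = n" by (auto dest: actV_free)
qed

lemma orbV_image_fundamental:
  assumes "fundamental_vertices actV V0"
  shows "orbV actV ` V0 = Vstar actV"
proof (rule card_subset_eq[OF finite_Vstar])
  show "orbV actV ` V0 \<subseteq> Vstar actV" unfolding Vstar_def by auto
  have "inj_on (orbV actV) V0" using assms unfolding fundamental_vertices_def inj_on_def by blast
  then show "card (orbV actV ` V0) = card (Vstar actV)"
    using assms by (simp add: card_image fundamental_vertices_def)
qed

lemma coord_actV:
  assumes f: "fundamental_vertices actV V0" and v0: "v0 \<in> V0"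
  shows "coord actV V0 (actV m v0) = m"
  unfolding coord_def
proof (rule the_equality)
  show "\<exists>v1\<in>V0. actV m v1 = actV m v0" using v0 by blast
next
  fix n assume "\<exists>v1\<in>V0. actV n v1 = actV m v0"
  then obtain v1 where v1: "v1 \<in> V0" "actV n v1 = actV m v0" by blast
  then have "orbV actV v1 = orbV actV v0" by (metis orbV_actV)
  with f v0 v1(1) have "v1 = v0" unfolding fundamental_vertices_def by blast
  with v1(2) show "n = m" by (simp add: actV_inject)
qed

lemma edge_index_actE_eq_0:
  assumes "fundamental_vertices actV V0" "src e \<in> V0" "tgt e \<in> V0"
  shows "edge_index src tgt actV V0 (actE m e) = 0"
  using assms by (simp add: edge_index_def src_actE tgt_actE coord_actV)

lemma edge_translate_to_src:
  assumes "src e \<in> orbV actV u"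
  obtains e' where "src e' = u" "orbV actV (tgt e') = orbV actV (tgt e)"
proof -
  from assms obtain m where m: "src e = actV m u" unfolding orbV_def by auto
  have "src (actE (- m) e) = u"
    using m by (simp add: src_actE flip: actV_add) (simp add: actV_zero)
  moreover have "orbV actV (tgt (actE (- m) e)) = orbV actV (tgt e)"
    by (simp add: tgt_actE orbV_actV)
  ultimately show ?thesis by (rule that)
qed

lemma tree_extend_transversal:
  assumes tree: "is_tree src tgt rv VT ET" and v0: "v0 \<in> VT"
    and missing: "orbV actV x \<notin> orbV actV ` VT"
  obtains w ET' where "is_tree src tgt rv (insert w VT) ET'" "orbV actV w \<notin> orbV actV ` VT"
proof -
  define S where "S = {y. orbV actV y \<in> orbV actV ` VT}"
  obtain es where "walk_from src tgt v0 es x" using walk_exists by blast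
  moreover have "v0 \<in> S" "x \<notin> S" using v0 missing unfolding S_def by auto
  ultimately obtain e where e: "src e \<in> S" "tgt e \<notin> S" using walk_from_leaves_set by metis
  then obtain u where u: "u \<in> VT" "orbV actV (src e) = orbV actV u" unfolding S_def by auto
  then have "src e \<in> orbV actV u" using mem_orbV by metis
  then obtain e' where e': "src e' = u" "orbV actV (tgt e') = orbV actV (tgt e)"
    by (rule edge_translate_to_src)
  with e have new: "orbV actV (tgt e') \<notin> orbV actV ` VT" unfolding S_def by simp
  then have "tgt e' \<notin> VT" by blast
  with tree u(1) e'(1) have "is_tree src tgt rv (insert (tgt e') VT) (insert e' (insert (rv e') ET))"
    by (intro is_tree_add_leaf rv_rv rv_neq src_rv) simp_all
  then show ?thesis using new by (rule that)
qed

lemma exists_tree_transversal: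
  assumes "1 \<le> k" "k \<le> card (Vstar actV)"
  shows "\<exists>VT ET. is_tree src tgt rv VT ET \<and> finite VT \<and> card VT = k \<and> inj_on (orbV actV) VT"
  using assms
proof (induction k rule: dec_induct)
  case base
  show ?case using is_tree_singleton by fastforce
next
  case (step n)
  then obtain VT ET where tree: "is_tree src tgt rv VT ET" and fin: "finite VT"
    and card: "card VT = n" and inj: "inj_on (orbV actV) VT"
    by auto
  have "orbV actV ` VT \<noteq> Vstar actV"
    using step.prems card card_image[OF inj] by auto
  moreover have "orbV actV ` VT \<subseteq> Vstar actV" unfolding Vstar_def by auto
  ultimately obtain x where x: "orbV actV x \<notin> orbV actV ` VT" unfolding Vstar_def by auto
  from step.hyps(1) card obtain v0 where v0: "v0 \<in> VT" by fastforce
  obtain w ET' where "is_tree src tgt rv (insert w VT) ET'" "orbV actV w \<notin> orbV actV ` VT"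
    by (rule tree_extend_transversal[OF tree v0 x])
  moreover from this(2) have "w \<notin> VT" by blast
  ultimately show ?case using fin card inj by (intro exI[of _ "insert w VT"] exI[of _ ET']) auto
qed

lemma exists_fundamental_tree:
  "\<exists>VT ET. is_tree src tgt rv VT ET \<and> fundamental_vertices actV VT"
proof -
  have "Vstar actV \<noteq> {}" unfolding Vstar_def by simp
  with finite_Vstar have "1 \<le> card (Vstar actV)" by (simp add: Suc_le_eq card_gt_0_iff)
  from exists_tree_transversal[OF this order_refl] show ?thesis
    unfolding fundamental_vertices_def inj_on_def by blast
qed

lemma nonbridge_orbit:
  assumes tree: "is_tree src tgt rv VT ET" and f: "fundamental_vertices actV VT"
    and two: "2 \<le> card (Vstar actV)" and C: "C \<in> Vstar actV"
  obtains A where "A \<in> Astar actE" "\<exists>e\<in>A. src e \<in> C"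
    "\<forall>e\<in>A. edge_index src tgt actV VT e = 0"
proof -
  from C have "C \<in> orbV actV ` VT" by (simp add: orbV_image_fundamental[OF f])
  then obtain v0 where v0: "C = orbV actV v0" "v0 \<in> VT" by (rule imageE)
  have "\<not> VT \<subseteq> {v0}"
  proof
    assume "VT \<subseteq> {v0}"
    then have "card VT \<le> 1" using card_mono[of "{v0}" VT] by simp
    with f two show False unfolding fundamental_vertices_def by simp
  qed
  then obtain w where "w \<in> VT" "w \<noteq> v0" by blast
  then obtain e where e: "e \<in> ET" "src e = v0" "tgt e \<in> VT"
    by (rule tree_edge_from_vertex[OF tree v0(2)])
  show ?thesis
  proof (rule that)
    show "orbE actE e \<in> Astar actE" unfolding Astar_def by simp
    have "e \<in> orbE actE e" unfolding orbE_def by (metis actE_zero rangeI)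
    moreover have "src e \<in> C" using e(2) v0(1) mem_orbV by blast
    ultimately show "\<exists>e'\<in>orbE actE e. src e' \<in> C" by blast
    show "\<forall>e'\<in>orbE actE e. edge_index src tgt actV VT e' = 0"
      unfolding orbE_def using edge_index_actE_eq_0[OF f] e(2,3) v0(2) by auto
  qed
qed

lemma beta_star_ratio_le_1_minus:
  assumes "is_tree src tgt rv VT ET" "fundamental_vertices actV VT"
    "2 \<le> card (Vstar actV)" "C \<in> Vstar actV"
  shows "real (beta_star src tgt actV actE VT C) / real (kappa_star src actV actE C)
           \<le> 1 - 1 / real (kappa_star src actV actE C)"
proof -
  obtain A where A: "A \<in> Astar actE" "\<exists>e\<in>A. src e \<in> C"
    "\<forall>e\<in>A. edge_index src tgt actV VT e = 0"
    by (rule nonbridge_orbit[OF assms])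
  show ?thesis
    unfolding beta_star_def kappa_star_def
    by (rule card_ratio_le_1_minus[where a = A]) (use A in auto)
qed

end

theorem lemma3p1:
  fixes src tgt :: "'e \<Rightarrow> 'v" and rv :: "'e \<Rightarrow> 'e"
    and actV :: "int^'d::finite \<Rightarrow> 'v \<Rightarrow> 'v" and actE :: "int^'d \<Rightarrow> 'e \<Rightarrow> 'e"
  assumes "periodic_graph src tgt rv actV actE"
  shows "(\<exists>VT ET. is_tree src tgt rv VT ET \<and> fundamental_vertices actV VT) \<and>
         (\<forall>VT ET. is_tree src tgt rv VT ET \<and> fundamental_vertices actV VT \<longrightarrow>
            (let \<nu> = card (Vstar actV);
                 \<beta> = (\<Sum>C\<in>Vstar actV. real (beta_star src tgt actV actE VT C)
                                         / real (kappa_star src actV actE C))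
             in (\<nu> = 1 \<longrightarrow> \<beta> \<le> 1) \<and>
                (\<nu> \<ge> 2 \<longrightarrow> \<beta> \<le> real \<nu> - (\<Sum>C\<in>Vstar actV. 1 / real (kappa_star src actV actE C)))))"
proof (intro conjI allI impI)
  show "\<exists>VT ET. is_tree src tgt rv VT ET \<and> fundamental_vertices actV VT"
    using exists_fundamental_tree[OF assms] .
next
  fix VT ET assume tree: "is_tree src tgt rv VT ET \<and> fundamental_vertices actV VT"
  let ?r = "\<lambda>C. real (beta_star src tgt actV actE VT C) / real (kappa_star src actV actE C)"
  let ?k = "\<lambda>C. 1 / real (kappa_star src actV actE C)"
  have "(\<Sum>C\<in>Vstar actV. ?r C) \<le> (\<Sum>C\<in>Vstar actV. 1)"
    by (intro sum_mono beta_star_ratio_le_1)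
  then have one: "(\<Sum>C\<in>Vstar actV. ?r C) \<le> real (card (Vstar actV))" by simp
  have two: "(\<Sum>C\<in>Vstar actV. ?r C) \<le> real (card (Vstar actV)) - (\<Sum>C\<in>Vstar actV. ?k C)"
    if "2 \<le> card (Vstar actV)"
  proof -
    have "(\<Sum>C\<in>Vstar actV. ?r C) \<le> (\<Sum>C\<in>Vstar actV. 1 - ?k C)"
      using tree that by (intro sum_mono beta_star_ratio_le_1_minus[OF assms]) auto
    then show ?thesis by (simp add: sum_subtractf)
  qed
  from one two show "let \<nu> = card (Vstar actV); \<beta> = \<Sum>C\<in>Vstar actV. ?r C
     in (\<nu> = 1 \<longrightarrow> \<beta> \<le> 1) \<and> (\<nu> \<ge> 2 \<longrightarrow> \<beta> \<le> real \<nu> - (\<Sum>C\<in>Vstar actV. ?k C))"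
    by (simp add: Let_def)
qed

end
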